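(* The number of occurrences of the endhered pattern $21$ (resp. $12$) in a uniformly random matching of size $n$ converges in distribution, as $n\to\infty$, to a Poisson law with parameter $1/2$; precisely, for every fixed $k\ge0$, $$\frac{a_{n,k}}{(2n-1)!!}\to\frac{e^{-1/2}}{2^k k!}\qquad(n\to\infty),$$ where $a_{n,k}$ is the number of matchings of size $n$ with exactly $k$ occurrences of the pattern.
   Context: A matching of size $n$ is a set of $n$ arcs $(a,b)$ with $1\le a<b\le 2n$ such that each point of $\{1,\dots,2n\}$ belongs to exactly one arc; there are $(2n-1)!!$ of them. An occurrence of the endhered pattern $21$ in a matching is a pair of arcs of the form $(i+1,j+2),(i+2,j+1)$; an occurrence of $12$ is a pair of arcs of the form $(i+1,j+1),(i+2,j+2)$. The number of occurrences is the number of such pairs. *)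

theory Defs
  imports Complex_Main
begin

definition is_matching :: "nat \<Rightarrow> (nat \<times> nat) set \<Rightarrow> bool" where
  "is_matching n M \<longleftrightarrow>
     (\<forall>(a,b)\<in>M. 1 \<le> a \<and> a < b \<and> b \<le> 2*n) \<and>
     (\<forall>x\<in>{1..2*n}. \<exists>!e. e \<in> M \<and> (fst e = x \<or> snd e = x))"

definition matchings :: "nat \<Rightarrow> (nat \<times> nat) set set" where
  "matchings n = {M. is_matching n M}"

text \<open>Occurrences of the pattern 21: pairs of arcs (i+1,j+2),(i+2,j+1);
  indexed by (a,b) = (i+1,j+1), i.e. arcs (a,b+1) and (a+1,b).\<close>
definition occ21 :: "(nat \<times> nat) set \<Rightarrow> nat" where
  "occ21 M = card {(a,b). (a, b+1) \<in> M \<and> (a+1, b) \<in> M}"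

definition occ12 :: "(nat \<times> nat) set \<Rightarrow> nat" where
  "occ12 M = card {(a,b). (a, b) \<in> M \<and> (a+1, b+1) \<in> M}"

definition a_nk :: "((nat \<times> nat) set \<Rightarrow> nat) \<Rightarrow> nat \<Rightarrow> nat \<Rightarrow> nat" where
  "a_nk occ n k = card {M \<in> matchings n. occ M = k}"

definition odd_dfact :: "nat \<Rightarrow> nat" where
  "odd_dfact n = (\<Prod>i\<in>{1..n}. 2*i - 1)"

end

theory Submission
  imports Defs "HOL-Analysis.Uniform_Limit"
begin

(* Every matching of size n + 1 arises in exactly one way from a matching M of size n by
   inserting a new point at one of the positions a = 1, ..., 2n + 1 and joining it to the new
   last point 2n + 2.  An occurrence of the pattern in M uses two pairs of adjacent points
   {p, p + 1} and {q, q + 1}; it survives the insertion unless a falls between the points of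
   one of these pairs.  Distinct occurrences use disjoint points, so if M has m occurrences,
   then 2m positions destroy one occurrence each, exactly one position creates a new occurrence
   with the new arc, and the remaining 2n - 2m positions change nothing.  Summing binomial
   coefficients over the positions gives, for the binomial moments
   S(n, r) = sum over M of (occ M choose r), the recurrence
   S(n + 1, r) = (2n + 1 - 2r) S(n, r) + S(n, r - 1), whence
   S(n + 1, r) = (n choose r) (2(n - r) + 1)!!.  Divided by (2n + 1)!! these tend to
   (1/2)^r / r!, the binomial moments of the Poisson law with parameter 1/2; binomial
   inversion and Tannery's theorem turn this into convergence of the point probabilities. *)

section \<open>Matchings built by inserting a last arc\<close>

lemma is_matchingI:
  assumes bounds: "\<And>a b. (a, b) \<in> M \<Longrightarrow> 1 \<le> a \<and> a < b \<and> b \<le> 2 * n"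
    and disjoint: "\<And>a b c d. (a, b) \<in> M \<Longrightarrow> (c, d) \<in> M \<Longrightarrow>
      {a, b} \<inter> {c, d} \<noteq> {} \<Longrightarrow> (a, b) = (c, d)"
    and covers: "\<And>x. x \<in> {1..2 * n} \<Longrightarrow> \<exists>y. (x, y) \<in> M \<or> (y, x) \<in> M"
  shows "is_matching n M"
  unfolding is_matching_def
proof (intro conjI ballI)
  show "case e of (a, b) \<Rightarrow> 1 \<le> a \<and> a < b \<and> b \<le> 2 * n" if "e \<in> M" for e
    using bounds that by (cases e) auto
  fix x assume "x \<in> {1..2 * n}"
  then obtain e where e: "e \<in> M" "fst e = x \<or> snd e = x" using covers by force
  have "e' = e" if "e' \<in> M" "fst e' = x \<or> snd e' = x" for e'
    using disjoint[of "fst e'" "snd e'" "fst e" "snd e"] that e by auto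
  then show "\<exists>!e. e \<in> M \<and> (fst e = x \<or> snd e = x)" using e by blast
qed

lemma matching_arc_bounds:
  "is_matching n M \<Longrightarrow> (a, b) \<in> M \<Longrightarrow> 1 \<le> a \<and> a < b \<and> b \<le> 2 * n"
  unfolding is_matching_def by blast

lemma matching_arcs_eq:
  assumes M: "is_matching n M" and ab: "(a, b) \<in> M" and cd: "(c, d) \<in> M"
    and common: "{a, b} \<inter> {c, d} \<noteq> {}"
  shows "(a, b) = (c, d)"
proof -
  obtain x where x: "x \<in> {a, b}" "x \<in> {c, d}" using common by blast
  then have "x \<in> {1..2 * n}" using matching_arc_bounds[OF M ab] by auto
  then have unique: "\<exists>!e. e \<in> M \<and> (fst e = x \<or> snd e = x)"
    using M unfolding is_matching_def by blast
  have "(a, b) \<in> M \<and> (fst (a, b) = x \<or> snd (a, b) = x)"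
    "(c, d) \<in> M \<and> (fst (c, d) = x \<or> snd (c, d) = x)"
    using ab cd x by auto
  with unique show ?thesis by blast
qed

lemma matching_covers:
  "is_matching n M \<Longrightarrow> x \<in> {1..2 * n} \<Longrightarrow> \<exists>y. (x, y) \<in> M \<or> (y, x) \<in> M"
  unfolding is_matching_def by (metis prod.collapse)

lemma matching_ends_disjoint: "is_matching n M \<Longrightarrow> fst ` M \<inter> snd ` M = {}"
proof (intro equals0I)
  fix x assume M: "is_matching n M" and "x \<in> fst ` M \<inter> snd ` M"
  then obtain y z where xy: "(x, y) \<in> M" and zx: "(z, x) \<in> M" by force
  have "(x, y) = (z, x)" by (rule matching_arcs_eq[OF M xy zx]) simp
  then show False using matching_arc_bounds[OF M xy] by simp
qed

lemma matching_subset: "is_matching n M \<Longrightarrow> M \<subseteq> {1..2 * n} \<times> {1..2 * n}"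
  by (fastforce dest: matching_arc_bounds)

lemma finite_matchings: "finite (matchings n)"
proof (rule finite_subset)
  show "matchings n \<subseteq> Pow ({1..2 * n} \<times> {1..2 * n})"
    unfolding matchings_def using matching_subset by blast
qed simp

lemma matchings_0: "matchings 0 = {{}}"
  using matching_subset[of 0] by (auto simp: matchings_def is_matching_def)

definition shift :: "nat \<Rightarrow> nat \<Rightarrow> nat" where
  "shift a x = (if x < a then x else Suc x)"

lemma shift_neq [simp]: "shift a x \<noteq> a"
  by (simp add: shift_def)

lemma shift_eq_iff [simp]: "shift a x = shift a y \<longleftrightarrow> x = y"
  by (auto simp: shift_def)

lemma shift_less_iff [simp]: "shift a x < shift a y \<longleftrightarrow> x < y"
  by (auto simp: shift_def)

lemma shift_bounds: "x \<le> shift a x \<and> shift a x \<le> Suc x"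
  by (simp add: shift_def)

lemma range_shift: "range (shift a) = - {a}"
proof -
  have "z \<in> range (shift a)" if "z \<noteq> a" for z
    using that by (intro image_eqI[of _ _ "if z < a then z else z - 1"]) (auto simp: shift_def)
  then show ?thesis by auto
qed

lemma shift_Suc: "Suc x \<noteq> a \<Longrightarrow> shift a (Suc x) = Suc (shift a x)"
  by (auto simp: shift_def)

lemma shift_add_of_bool: "Suc x \<noteq> a \<Longrightarrow> shift a (x + of_bool b) = shift a x + of_bool b"
  by (cases b) (simp_all add: shift_Suc)

lemma shift_preimage:
  assumes "p \<noteq> a" "Suc p \<noteq> a"
  obtains p0 where "p = shift a p0" "Suc p0 \<noteq> a"
  using assms by (intro that[of "if p < a then p else p - 1"]) (auto simp: shift_def)

definition insert_arc :: "nat \<Rightarrow> nat \<Rightarrow> (nat \<times> nat) set \<Rightarrow> (nat \<times> nat) set" where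
  "insert_arc n a M = map_prod (shift a) (shift a) ` M \<union> {(a, 2 * n + 2)}"

lemma mem_insert_arc:
  "(x, y) \<in> insert_arc n a M \<longleftrightarrow>
     (x, y) = (a, 2 * n + 2) \<or> (\<exists>u v. (u, v) \<in> M \<and> x = shift a u \<and> y = shift a v)"
  unfolding insert_arc_def by auto

lemma shift_mem_insert_arc [simp]:
  "(shift a u, shift a v) \<in> insert_arc n a M \<longleftrightarrow> (u, v) \<in> M"
  unfolding mem_insert_arc by auto

lemma shifted_arc_bounds:
  assumes M: "is_matching n M" and uv: "(u, v) \<in> M"
  shows "1 \<le> shift a u \<and> shift a u < shift a v \<and> shift a v \<le> 2 * n + 1"
proof -
  have "1 \<le> u" "u < v" "v \<le> 2 * n" using matching_arc_bounds[OF M uv] by auto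
  moreover have "u \<le> shift a u" "shift a v \<le> Suc v"
    using shift_bounds[of u a] shift_bounds[of v a] by auto
  ultimately show ?thesis by simp
qed

lemma insert_arc_touching_new_arc:
  assumes M: "is_matching n M" and arc: "(x, y) \<in> insert_arc n a M"
    and touch: "{a, 2 * n + 2} \<inter> {x, y} \<noteq> {}"
  shows "(x, y) = (a, 2 * n + 2)"
proof (rule ccontr)
  assume "(x, y) \<noteq> (a, 2 * n + 2)"
  then obtain u v where uv: "(u, v) \<in> M" "x = shift a u" "y = shift a v"
    using arc unfolding mem_insert_arc by blast
  then have "shift a u \<noteq> 2 * n + 2" "shift a v \<noteq> 2 * n + 2"
    using shifted_arc_bounds[OF M uv(1), of a] by linarith+
  then have "{a, 2 * n + 2} \<inter> {x, y} = {}" using uv(2,3) by simp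
  with touch show False by simp
qed

lemma insert_arc_arcs_eq:
  assumes M: "is_matching n M" and xy: "(x, y) \<in> insert_arc n a M"
    and zw: "(z, w) \<in> insert_arc n a M" and common: "{x, y} \<inter> {z, w} \<noteq> {}"
  shows "(x, y) = (z, w)"
proof (cases "(x, y) = (a, 2 * n + 2) \<or> (z, w) = (a, 2 * n + 2)")
  case True
  then consider "(x, y) = (a, 2 * n + 2)" | "(z, w) = (a, 2 * n + 2)" by blast
  then show ?thesis
  proof cases
    case 1
    have "(z, w) = (a, 2 * n + 2)"
      by (rule insert_arc_touching_new_arc[OF M zw]) (use common 1 in simp)
    with 1 show ?thesis by simp
  next
    case 2
    have "(x, y) = (a, 2 * n + 2)"
      by (rule insert_arc_touching_new_arc[OF M xy]) (use common 2 in auto)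
    with 2 show ?thesis by simp
  qed
next
  case False
  then obtain u v u' v' where uv: "(u, v) \<in> M" "x = shift a u" "y = shift a v"
    and uv': "(u', v') \<in> M" "z = shift a u'" "w = shift a v'"
    using xy zw unfolding mem_insert_arc by auto
  have "{u, v} \<inter> {u', v'} \<noteq> {}" using common uv(2,3) uv'(2,3) by auto
  then show ?thesis using matching_arcs_eq[OF M uv(1) uv'(1)] uv(2,3) uv'(2,3) by simp
qed

lemma insert_arc_matching:
  assumes M: "is_matching n M" and a: "a \<in> {1..2 * n + 1}"
  shows "is_matching (Suc n) (insert_arc n a M)"
proof (rule is_matchingI)
  show "1 \<le> x \<and> x < y \<and> y \<le> 2 * Suc n" if xy: "(x, y) \<in> insert_arc n a M" for x y
  proof (cases "(x, y) = (a, 2 * n + 2)")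
    case False
    then obtain u v where "(u, v) \<in> M" "x = shift a u" "y = shift a v"
      using xy unfolding mem_insert_arc by blast
    then show ?thesis using shifted_arc_bounds[OF M, of u v a] by simp
  qed (use a in simp)
  show "(x, y) = (z, w)"
    if "(x, y) \<in> insert_arc n a M" "(z, w) \<in> insert_arc n a M" "{x, y} \<inter> {z, w} \<noteq> {}"
    for x y z w
    using insert_arc_arcs_eq[OF M that] .
  show "\<exists>y. (x, y) \<in> insert_arc n a M \<or> (y, x) \<in> insert_arc n a M"
    if x: "x \<in> {1..2 * Suc n}" for x
  proof (cases "x = a \<or> x = 2 * n + 2")
    case True
    then show ?thesis unfolding mem_insert_arc by auto
  next
    case False
    then obtain x0 where x0: "x = shift a x0" using range_shift[of a] by auto
    then have "x0 \<in> {1..2 * n}" using x a False by (auto simp: shift_def split: if_splits)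
    then obtain y where "(x0, y) \<in> M \<or> (y, x0) \<in> M" using matching_covers[OF M] by blast
    then show ?thesis using x0 shift_mem_insert_arc by blast
  qed
qed

definition delete_arc :: "nat \<Rightarrow> (nat \<times> nat) set \<Rightarrow> (nat \<times> nat) set" where
  "delete_arc a M = {(u, v). (shift a u, shift a v) \<in> M}"

lemma delete_insert_arc [simp]: "delete_arc a (insert_arc n a M) = M"
  by (simp add: delete_arc_def)

lemma insert_delete_arc:
  assumes M: "is_matching (Suc n) M" and aM: "(a, 2 * n + 2) \<in> M"
  shows "insert_arc n a (delete_arc a M) = M"
proof (intro equalityI subsetI)
  fix e assume e: "e \<in> M"
  show "e \<in> insert_arc n a (delete_arc a M)"
  proof (cases "e = (a, 2 * n + 2)")
    case False
    then have "{a, 2 * n + 2} \<inter> {fst e, snd e} = {}"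
      using matching_arcs_eq[OF M _ aM, of "fst e" "snd e"] e by auto
    then have "fst e \<in> range (shift a)" "snd e \<in> range (shift a)"
      using range_shift[of a] by auto
    then obtain u v where "e = (shift a u, shift a v)" by (metis prod.collapse rangeE)
    then show ?thesis using e by (simp add: delete_arc_def)
  qed (simp add: insert_arc_def)
qed (use aM in \<open>auto simp: insert_arc_def delete_arc_def\<close>)

lemma delete_arc_matching:
  assumes M: "is_matching (Suc n) M" and aM: "(a, 2 * n + 2) \<in> M"
  shows "is_matching n (delete_arc a M)"
proof -
  have a: "1 \<le> a" "a < 2 * n + 2" using matching_arc_bounds[OF M aM] by simp_all
  have not_new: "{a, 2 * n + 2} \<inter> {x, y} = {}"
    if "(x, y) \<in> M" "(x, y) \<noteq> (a, 2 * n + 2)" for x y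
    using matching_arcs_eq[OF M that(1) aM] that(2) by auto
  show ?thesis
  proof (rule is_matchingI)
    fix u v assume "(u, v) \<in> delete_arc a M"
    then have uv: "(shift a u, shift a v) \<in> M" unfolding delete_arc_def by simp
    then have "1 \<le> shift a u" "shift a v \<le> 2 * n + 1"
      using matching_arc_bounds[OF M uv] not_new[OF uv] by auto
    then show "1 \<le> u \<and> u < v \<and> v \<le> 2 * n"
      using matching_arc_bounds[OF M uv] a by (auto simp: shift_def split: if_splits)
  next
    fix u v u' v' assume "(u, v) \<in> delete_arc a M" "(u', v') \<in> delete_arc a M"
      "{u, v} \<inter> {u', v'} \<noteq> {}"
    then show "(u, v) = (u', v')"
      using matching_arcs_eq[OF M, of "shift a u" "shift a v" "shift a u'" "shift a v'"]
      unfolding delete_arc_def by auto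
  next
    fix z assume z: "z \<in> {1..2 * n}"
    then have "shift a z \<in> {1..2 * Suc n}" using shift_bounds[of z a] by simp
    then obtain y where y: "(shift a z, y) \<in> M \<or> (y, shift a z) \<in> M"
      using matching_covers[OF M] by blast
    have "shift a z \<noteq> 2 * n + 2" using z shift_bounds[of z a] by simp
    then have "(shift a z, y) \<noteq> (a, 2 * n + 2)" "(y, shift a z) \<noteq> (a, 2 * n + 2)" by auto
    then have "y \<noteq> a" using y not_new[of "shift a z" y] not_new[of y "shift a z"] by auto
    then obtain y0 where "y = shift a y0" using range_shift[of a] by auto
    then show "\<exists>y. (z, y) \<in> delete_arc a M \<or> (y, z) \<in> delete_arc a M"
      using y unfolding delete_arc_def by auto
  qed
qed

lemma matching_last_arc:
  assumes M: "is_matching n M" and n: "n \<noteq> 0"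
  obtains x where "(x, 2 * n) \<in> M"
proof -
  have "2 * n \<in> {1..2 * n}" using n by simp
  then obtain y where "(2 * n, y) \<in> M \<or> (y, 2 * n) \<in> M" using matching_covers[OF M] by blast
  then show thesis using that matching_arc_bounds[OF M, of "2 * n" y] by auto
qed

lemma matching_decompose:
  assumes M: "is_matching (Suc n) M"
  obtains a M' where "is_matching n M'" "a \<in> {1..2 * n + 1}" "M = insert_arc n a M'"
proof -
  obtain a where "(a, 2 * Suc n) \<in> M" using matching_last_arc[OF M] by blast
  then have aM: "(a, 2 * n + 2) \<in> M" by simp
  then have "a \<in> {1..2 * n + 1}" using matching_arc_bounds[OF M aM] by simp
  then show thesis
    using that delete_arc_matching[OF M aM] insert_delete_arc[OF M aM] by simp
qed

lemma insert_arc_eq_iff: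
  assumes M': "is_matching n M'"
  shows "insert_arc n a M = insert_arc n a' M' \<longleftrightarrow> a = a' \<and> M = M'"
proof
  assume eq: "insert_arc n a M = insert_arc n a' M'"
  have "(a, 2 * n + 2) \<in> insert_arc n a M" by (simp add: insert_arc_def)
  then have "(a, 2 * n + 2) \<in> insert_arc n a' M'" by (simp only: eq)
  moreover have "shift a' v \<noteq> 2 * n + 2" if "(u, v) \<in> M'" for u v
    using shifted_arc_bounds[OF M' that, of a'] by simp
  ultimately have "a = a'" unfolding mem_insert_arc by force
  then show "a = a' \<and> M = M'"
    using arg_cong[OF eq, of "delete_arc a"] by simp
qed simp

lemma bij_betw_insert_arc:
  "bij_betw (\<lambda>(M, a). insert_arc n a M) (matchings n \<times> {1..2 * n + 1}) (matchings (Suc n))"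
proof (rule bij_betw_imageI)
  show "inj_on (\<lambda>(M, a). insert_arc n a M) (matchings n \<times> {1..2 * n + 1})"
    by (rule inj_onI) (clarsimp simp: matchings_def insert_arc_eq_iff)
  show "(\<lambda>(M, a). insert_arc n a M) ` (matchings n \<times> {1..2 * n + 1}) = matchings (Suc n)"
  proof (intro equalityI subsetI)
    fix M assume "M \<in> matchings (Suc n)"
    then obtain a M' where "is_matching n M'" "a \<in> {1..2 * n + 1}" "M = insert_arc n a M'"
      unfolding matchings_def by (auto elim: matching_decompose)
    then show "M \<in> (\<lambda>(M, a). insert_arc n a M) ` (matchings n \<times> {1..2 * n + 1})"
      unfolding matchings_def by force
  qed (auto simp: matchings_def insert_arc_matching)
qed

lemma sum_matchings_Suc:
  "(\<Sum>M\<in>matchings (Suc n). f M)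
     = (\<Sum>M\<in>matchings n. \<Sum>a\<in>{1..2 * n + 1}. f (insert_arc n a M))"
proof -
  have "(\<Sum>M\<in>matchings (Suc n). f M)
      = (\<Sum>p\<in>matchings n \<times> {1..2 * n + 1}. f ((\<lambda>(M, a). insert_arc n a M) p))"
    by (rule sum.reindex_bij_betw[OF bij_betw_insert_arc, symmetric])
  also have "\<dots> = (\<Sum>M\<in>matchings n. \<Sum>a\<in>{1..2 * n + 1}. f (insert_arc n a M))"
    unfolding sum.cartesian_product by (rule sum.cong) auto
  finally show ?thesis .
qed

section \<open>Occurrences of the patterns\<close>

(* (p, q) is the occurrence on the left points p, p + 1 and the right points q, q + 1;
   nested = True gives the pattern 21, nested = False the pattern 12. *)
definition occurrences :: "bool \<Rightarrow> (nat \<times> nat) set \<Rightarrow> (nat \<times> nat) set" where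
  "occurrences nested M =
     {(p, q). (p + of_bool nested, q) \<in> M \<and> (p + of_bool (\<not> nested), Suc q) \<in> M}"

lemma occ12_eq: "occ12 = (\<lambda>M. card (occurrences False M))"
  unfolding occ12_def occurrences_def by simp

lemma occ21_eq: "occ21 = (\<lambda>M. card (occurrences True M))"
  unfolding occ21_def occurrences_def by (simp add: conj_commute)

(* A new point inserted at position a separates p from p + 1 or q from q + 1
   exactly when a \<in> split_slots (p, q). *)
fun split_slots :: "nat \<times> nat \<Rightarrow> nat set" where
  "split_slots (p, q) = {Suc p, Suc q}"

lemma occurrence_ends:
  assumes "(p, q) \<in> occurrences nested M"
  shows "{p, Suc p} \<subseteq> fst ` M \<and> {q, Suc q} \<subseteq> snd ` M"
  using assms by (cases nested) (force simp: occurrences_def)+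

lemma occurrence_bounds:
  assumes M: "is_matching n M" and pq: "(p, q) \<in> occurrences nested M"
  shows "p < q \<and> Suc q \<le> 2 * n"
  using pq matching_arc_bounds[OF M] unfolding occurrences_def by fastforce

lemma finite_occurrences:
  assumes M: "is_matching n M"
  shows "finite (occurrences nested M)"
proof (rule finite_subset)
  show "occurrences nested M \<subseteq> {..2 * n} \<times> {..2 * n}"
    using occurrence_bounds[OF M] by fastforce
qed simp

lemma disjoint_split_slots:
  assumes M: "is_matching n M"
  shows "disjoint_family_on split_slots (occurrences nested M)"
  unfolding disjoint_family_on_def
proof (intro ballI impI)
  fix e e' assume e: "e \<in> occurrences nested M" and e': "e' \<in> occurrences nested M"
    and "e \<noteq> e'"
  obtain p q p' q' where pq: "e = (p, q)" and pq': "e' = (p', q')" by fastforce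
  have arcs: "(p + of_bool nested, q) \<in> M" "(p' + of_bool nested, q') \<in> M"
    using e e' pq pq' unfolding occurrences_def by auto
  have "p \<noteq> p'"
    using matching_arcs_eq[OF M arcs] \<open>e \<noteq> e'\<close> pq pq' by auto
  moreover have "q \<noteq> q'"
    using matching_arcs_eq[OF M arcs] \<open>e \<noteq> e'\<close> pq pq' by auto
  moreover have "p \<noteq> q'" "q \<noteq> p'"
  proof -
    have "p \<in> fst ` M" "q \<in> snd ` M" using occurrence_ends e pq by auto
    moreover have "p' \<in> fst ` M" "q' \<in> snd ` M" using occurrence_ends e' pq' by auto
    ultimately show "p \<noteq> q'" "q \<noteq> p'" using matching_ends_disjoint[OF M] by auto
  qed
  ultimately show "split_slots e \<inter> split_slots e' = {}" using pq pq' by auto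
qed

lemma card_Union_split_slots:
  assumes M: "is_matching n M"
  shows "card (\<Union>(split_slots ` occurrences nested M)) = 2 * card (occurrences nested M)"
proof -
  have "card (split_slots e) = 2" if "e \<in> occurrences nested M" for e
  proof -
    obtain p q where e: "e = (p, q)" by fastforce
    have "p < q" using occurrence_bounds[OF M] that e by blast
    then show ?thesis using e by simp
  qed
  then have "(\<Sum>e\<in>occurrences nested M. card (split_slots e)) = 2 * card (occurrences nested M)"
    by simp
  moreover have "finite (split_slots e)" for e by (cases e) simp
  ultimately show ?thesis
    using card_UN_disjoint'[OF disjoint_split_slots[OF M] _ finite_occurrences[OF M]] by simp
qed

lemma card_occurrences_le:
  assumes M: "is_matching n M"
  shows "card (occurrences nested M) \<le> n"
proof -
  have "\<Union>(split_slots ` occurrences nested M) \<subseteq> {1..2 * n}"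
    using occurrence_bounds[OF M] by fastforce
  then have "card (\<Union>(split_slots ` occurrences nested M)) \<le> 2 * n"
    using card_mono[of "{1..2 * n}"] by fastforce
  then show ?thesis using card_Union_split_slots[OF M] by simp
qed

lemma card_avoiding_disjoint_family:
  assumes "finite Q" and "disjoint_family_on A Q"
  shows "card {e \<in> Q. a \<notin> A e} = card Q - (if a \<in> \<Union>(A ` Q) then 1 else 0)"
proof (cases "a \<in> \<Union>(A ` Q)")
  case True
  then obtain e0 where e0: "e0 \<in> Q" "a \<in> A e0" by blast
  then have "{e \<in> Q. a \<notin> A e} = Q - {e0}"
    using assms(2) unfolding disjoint_family_on_def by blast
  then show ?thesis using True e0(1) assms(1) by simp
next
  case False
  then have "{e \<in> Q. a \<notin> A e} = Q" by blast
  then show ?thesis using False by simp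
qed

definition surviving :: "nat \<Rightarrow> (nat \<times> nat) set \<Rightarrow> (nat \<times> nat) set" where
  "surviving a Q = map_prod (shift a) (shift a) ` {e \<in> Q. a \<notin> split_slots e}"

lemma occurrences_insert_arc_subset:
  assumes M: "is_matching n M" and last: "(x, 2 * n) \<in> M" and a: "a \<in> {1..2 * n + 1}"
  shows "occurrences nested (insert_arc n a M) \<subseteq>
           surviving a (occurrences nested M)
           \<union> (if a = x + of_bool (\<not> nested) then {(x, 2 * n + 1)} else {})"
proof
  let ?d = "of_bool nested :: nat" and ?d' = "of_bool (\<not> nested) :: nat"
  have N: "is_matching (Suc n) (insert_arc n a M)" by (rule insert_arc_matching[OF M a])
  fix e assume "e \<in> occurrences nested (insert_arc n a M)"
  then obtain p q where e: "e = (p, q)" and arc1: "(p + ?d, q) \<in> insert_arc n a M"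
    and arc2: "(p + ?d', Suc q) \<in> insert_arc n a M"
    unfolding occurrences_def by blast
  show "e \<in> surviving a (occurrences nested M)
    \<union> (if a = x + ?d' then {(x, 2 * n + 1)} else {})"
  proof (cases "Suc q = 2 * n + 2")
    case True
    have "(p + ?d', Suc q) = (a, 2 * n + 2)"
      by (rule matching_arcs_eq[OF N arc2]) (auto simp: insert_arc_def True)
    then have a_eq: "a = p + ?d'" by simp
    obtain u v where uv: "(u, v) \<in> M" "p + ?d = shift a u" "q = shift a v"
      using arc1 True unfolding mem_insert_arc by auto
    have "v = 2 * n" using matching_arc_bounds[OF M uv(1)] shift_bounds[of v a] uv(3) True by linarith
    then have "u = x" using matching_arcs_eq[OF M uv(1) last] by simp
    then have "p = x" using uv(2) a_eq by (cases nested) (auto simp: shift_def split: if_splits)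
    then show ?thesis using e a_eq True by simp
  next
    case False
    then have "(p + ?d', Suc q) \<noteq> (a, 2 * n + 2)" "(p + ?d, q) \<noteq> (a, 2 * n + 2)"
      using matching_arc_bounds[OF N arc2] by auto
    then obtain u v u' v' where uv: "(u, v) \<in> M" "p + ?d = shift a u" "q = shift a v"
      and uv': "(u', v') \<in> M" "p + ?d' = shift a u'" "Suc q = shift a v'"
      using arc1 arc2 unfolding mem_insert_arc by blast
    have "p \<noteq> a" "Suc p \<noteq> a" using uv(2) uv'(2) by (cases nested; auto)+
    then obtain p0 where p0: "p = shift a p0" "Suc p0 \<noteq> a" by (rule shift_preimage)
    have "q \<noteq> a" "Suc q \<noteq> a" using uv(3) uv'(3) by auto
    then obtain q0 where q0: "q = shift a q0" "Suc q0 \<noteq> a" by (rule shift_preimage)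
    have "(shift a (p0 + ?d), shift a q0) \<in> insert_arc n a M"
      "(shift a (p0 + ?d'), shift a (Suc q0)) \<in> insert_arc n a M"
      using arc1 arc2 p0 q0 by (simp_all add: shift_add_of_bool shift_Suc)
    then have "(p0, q0) \<in> occurrences nested M" unfolding occurrences_def by simp
    then show ?thesis using e p0 q0 unfolding surviving_def by auto
  qed
qed

lemma occurrences_insert_arc_supset:
  assumes M: "is_matching n M" and last: "(x, 2 * n) \<in> M"
  shows "surviving a (occurrences nested M)
           \<union> (if a = x + of_bool (\<not> nested) then {(x, 2 * n + 1)} else {})
         \<subseteq> occurrences nested (insert_arc n a M)"
proof
  let ?d = "of_bool nested :: nat" and ?d' = "of_bool (\<not> nested) :: nat"
  have x: "x < 2 * n" using matching_arc_bounds[OF M last] by simp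
  fix e
  assume "e \<in> surviving a (occurrences nested M) \<union> (if a = x + ?d' then {(x, 2 * n + 1)} else {})"
  then consider (kept) p q where "(p, q) \<in> occurrences nested M" "a \<notin> split_slots (p, q)"
      "e = (shift a p, shift a q)"
    | (new) "a = x + ?d'" "e = (x, 2 * n + 1)"
    unfolding surviving_def by (auto split: if_splits)
  then show "e \<in> occurrences nested (insert_arc n a M)"
  proof cases
    case kept
    then show ?thesis
      by (auto simp: occurrences_def shift_add_of_bool[symmetric] shift_Suc[symmetric])
  next
    case new
    have "shift a x = x + ?d" "shift a (2 * n) = 2 * n + 1"
      using new x by (cases nested; simp add: shift_def)+
    then have "(x + ?d, 2 * n + 1) \<in> insert_arc n a M"
      using last shift_mem_insert_arc[of a x "2 * n" n M] by simp
    moreover have "(x + ?d', Suc (2 * n + 1)) \<in> insert_arc n a M"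
      using new by (simp add: insert_arc_def)
    ultimately show ?thesis using new unfolding occurrences_def by simp
  qed
qed

lemma occurrences_insert_arc:
  assumes "is_matching n M" and "(x, 2 * n) \<in> M" and "a \<in> {1..2 * n + 1}"
  shows "occurrences nested (insert_arc n a M) =
           surviving a (occurrences nested M)
           \<union> (if a = x + of_bool (\<not> nested) then {(x, 2 * n + 1)} else {})"
  using occurrences_insert_arc_subset[OF assms] occurrences_insert_arc_supset[OF assms(1,2)]
  by (rule equalityI)

lemma new_slot_not_split:
  assumes M: "is_matching n M" and last: "(x, 2 * n) \<in> M"
  shows "x + of_bool (\<not> nested) \<notin> \<Union>(split_slots ` occurrences nested M)"
proof
  assume "x + of_bool (\<not> nested) \<in> \<Union>(split_slots ` occurrences nested M)"
  then obtain p q where pq: "(p, q) \<in> occurrences nested M"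
    and slot: "x + of_bool (\<not> nested) \<in> {Suc p, Suc q}" by auto
  from slot consider "x = p + of_bool nested" | "x \<in> {q, Suc q}" by (cases nested) auto
  then show False
  proof cases
    case 1
    then have "(x, q) \<in> M" using pq unfolding occurrences_def by simp
    then have "q = 2 * n" using matching_arcs_eq[OF M _ last] by simp
    then show False using occurrence_bounds[OF M pq] by simp
  next
    case 2
    then have "x \<in> snd ` M" using occurrence_ends[OF pq] by auto
    moreover have "x \<in> fst ` M" using last by force
    ultimately show False using matching_ends_disjoint[OF M] by auto
  qed
qed

lemma card_surviving:
  assumes M: "is_matching n M"
  shows "card (surviving a (occurrences nested M)) =
    card (occurrences nested M) - (if a \<in> \<Union>(split_slots ` occurrences nested M) then 1 else 0)"
proof -
  have "card (surviving a (occurrences nested M))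
      = card {e \<in> occurrences nested M. a \<notin> split_slots e}"
    unfolding surviving_def by (rule card_image) (simp add: inj_on_def)
  also have "\<dots> = card (occurrences nested M)
      - (if a \<in> \<Union>(split_slots ` occurrences nested M) then 1 else 0)"
    by (rule card_avoiding_disjoint_family[OF finite_occurrences[OF M] disjoint_split_slots[OF M]])
  finally show ?thesis .
qed

lemma card_occurrences_insert_arc:
  fixes nested :: bool
  assumes M: "is_matching n M" and last: "(x, 2 * n) \<in> M" and a: "a \<in> {1..2 * n + 1}"
  defines "Q \<equiv> occurrences nested M"
  shows "card (occurrences nested (insert_arc n a M)) =
    (if a \<in> \<Union>(split_slots ` Q) then card Q - 1
     else if a = x + of_bool (\<not> nested) then card Q + 1 else card Q)"
proof -
  let ?new = "if a = x + of_bool (\<not> nested) then {(x, 2 * n + 1)} else {}"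
  have "(x, 2 * n + 1) \<notin> surviving a Q"
  proof
    assume "(x, 2 * n + 1) \<in> surviving a Q"
    then obtain p q where "(p, q) \<in> occurrences nested M" "shift a q = 2 * n + 1"
      unfolding surviving_def Q_def by auto
    then show False using occurrence_bounds[OF M] shift_bounds[of q a] by fastforce
  qed
  then have disj: "surviving a Q \<inter> ?new = {}" by auto
  have "finite (surviving a Q)"
    unfolding surviving_def Q_def using finite_occurrences[OF M] by simp
  then have "card (occurrences nested (insert_arc n a M)) = card (surviving a Q) + card ?new"
    unfolding occurrences_insert_arc[OF M last a] Q_def[symmetric]
    by (rule card_Un_disjoint) (use disj in auto)
  then show ?thesis
    using card_surviving[OF M] new_slot_not_split[OF M last, of nested] by (simp add: Q_def)
qed

section \<open>Binomial moments\<close>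

lemma sum_slot_values:
  fixes h :: "nat \<Rightarrow> real"
  assumes S: "finite S" and G: "G \<subseteq> S" and c: "c \<in> S" "c \<notin> G"
    and card_G: "card G = 2 * m"
  shows "(\<Sum>a\<in>S. h (if a \<in> G then m - 1 else if a = c then m + 1 else m))
       = 2 * real m * h (m - 1) + h (m + 1) + (real (card S) - 2 * real m - 1) * h m"
proof -
  let ?f = "\<lambda>a. h (if a \<in> G then m - 1 else if a = c then m + 1 else m)"
  have card_rest: "card (S - G - {c}) = card S - 2 * m - 1"
    using G c card_G S by (simp add: card_Diff_subset finite_subset)
  have "card G + 1 \<le> card S"
    using card_mono[OF S, of "insert c G"] G c S finite_subset[OF G S] by simp
  then have real_rest: "real (card (S - G - {c})) = real (card S) - 2 * real m - 1"
    using card_rest card_G by (simp add: of_nat_diff)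
  have rest: "sum ?f (S - G - {c}) = (real (card S) - 2 * real m - 1) * h m"
  proof -
    have "sum ?f (S - G - {c}) = (\<Sum>a\<in>S - G - {c}. h m)" by (rule sum.cong) auto
    also have "\<dots> = real (card (S - G - {c})) * h m" by (rule sum_constant)
    finally show ?thesis unfolding real_rest .
  qed
  have "sum ?f G = (\<Sum>a\<in>G. h (m - 1))" by (rule sum.cong) auto
  then have in_G: "sum ?f G = 2 * real m * h (m - 1)" using card_G by simp
  have "sum ?f S = sum ?f (S - G) + sum ?f G"
    by (rule sum.subset_diff[OF G S])
  also have "sum ?f (S - G) = ?f c + sum ?f (S - G - {c})"
    using c S by (intro sum.remove) auto
  also have "?f c + sum ?f (S - G - {c}) + sum ?f G
      = h (m + 1) + (real (card S) - 2 * real m - 1) * h m + 2 * real m * h (m - 1)"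
    unfolding rest in_G using c by simp
  finally show ?thesis by (simp add: algebra_simps)
qed

lemma real_binomial_absorb_comp:
  "real m * real ((m - 1) choose r) = (real m - real r) * real (m choose r)"
proof (cases "r \<le> m")
  case True
  then show ?thesis
    using binomial_absorb_comp[of m r] of_nat_diff[OF True]
    by (metis of_nat_mult)
qed (simp add: binomial_eq_0)

lemma slot_binomial_identity:
  "2 * real m * real ((m - 1) choose r) + real ((m + 1) choose r)
     + (real N - 2 * real m - 1) * real (m choose r)
   = (real N - 2 * real r) * real (m choose r) + (if r = 0 then 0 else real (m choose (r - 1)))"
proof (cases r)
  case (Suc k)
  then show ?thesis
    using real_binomial_absorb_comp[of m r] by (simp add: algebra_simps)
qed simp

definition binomial_moment :: "bool \<Rightarrow> nat \<Rightarrow> nat \<Rightarrow> real" where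
  "binomial_moment nested n r = (\<Sum>M\<in>matchings n. real (card (occurrences nested M) choose r))"

lemma sum_insert_arc_binomial:
  assumes M: "is_matching n M" and n: "n \<noteq> 0"
  shows "(\<Sum>a\<in>{1..2 * n + 1}. real (card (occurrences nested (insert_arc n a M)) choose r))
    = (2 * real n + 1 - 2 * real r) * real (card (occurrences nested M) choose r)
      + (if r = 0 then 0 else real (card (occurrences nested M) choose (r - 1)))"
proof -
  obtain x where last: "(x, 2 * n) \<in> M" using matching_last_arc[OF M n] .
  define Q where "Q = occurrences nested M"
  define G where "G = \<Union>(split_slots ` Q)"
  define c where "c = x + of_bool (\<not> nested)"
  have eq: "real (card (occurrences nested (insert_arc n a M)) choose r)
      = real ((if a \<in> G then card Q - 1 else if a = c then card Q + 1 else card Q) choose r)"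
    if "a \<in> {1..2 * n + 1}" for a
    unfolding G_def Q_def c_def card_occurrences_insert_arc[OF M last that] ..
  have G: "G \<subseteq> {1..2 * n + 1}" using occurrence_bounds[OF M] by (fastforce simp: G_def Q_def)
  have c: "c \<in> {1..2 * n + 1}" "c \<notin> G"
    using matching_arc_bounds[OF M last] new_slot_not_split[OF M last]
    by (simp_all add: c_def G_def Q_def)
  have card_G: "card G = 2 * card Q" using card_Union_split_slots[OF M] by (simp add: G_def Q_def)
  have "(\<Sum>a\<in>{1..2 * n + 1}. real (card (occurrences nested (insert_arc n a M)) choose r))
      = (\<Sum>a\<in>{1..2 * n + 1}.
          real ((if a \<in> G then card Q - 1 else if a = c then card Q + 1 else card Q) choose r))"
    by (rule sum.cong[OF refl eq])
  also have "\<dots> = 2 * real (card Q) * real ((card Q - 1) choose r) + real ((card Q + 1) choose r)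
        + (real (card {1..2 * n + 1}) - 2 * real (card Q) - 1) * real (card Q choose r)"
    by (rule sum_slot_values[where h = "\<lambda>j. real (j choose r)", OF finite_atLeastAtMost G c card_G])
  also have "\<dots> = (2 * real n + 1 - 2 * real r) * real (card Q choose r)
      + (if r = 0 then 0 else real (card Q choose (r - 1)))"
    using slot_binomial_identity[of "card Q" r "2 * n + 1"] by simp
  finally show ?thesis unfolding Q_def .
qed

lemma binomial_moment_Suc:
  assumes n: "n \<noteq> 0"
  shows "binomial_moment nested (Suc n) r =
    (2 * real n + 1 - 2 * real r) * binomial_moment nested n r
    + (if r = 0 then 0 else binomial_moment nested n (r - 1))"
proof -
  have "binomial_moment nested (Suc n) r
      = (\<Sum>M\<in>matchings n. \<Sum>a\<in>{1..2 * n + 1}.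
          real (card (occurrences nested (insert_arc n a M)) choose r))"
    unfolding binomial_moment_def by (rule sum_matchings_Suc)
  also have "\<dots> = (\<Sum>M\<in>matchings n.
        (2 * real n + 1 - 2 * real r) * real (card (occurrences nested M) choose r)
        + (if r = 0 then 0 else real (card (occurrences nested M) choose (r - 1))))"
    by (rule sum.cong[OF refl], rule sum_insert_arc_binomial) (simp_all add: matchings_def n)
  also have "\<dots> = (2 * real n + 1 - 2 * real r) * binomial_moment nested n r
    + (if r = 0 then 0 else binomial_moment nested n (r - 1))"
    by (cases "r = 0") (simp_all add: binomial_moment_def sum.distrib sum_distrib_left)
  finally show ?thesis .
qed

lemma binomial_moment_1: "binomial_moment nested 1 r = (if r = 0 then 1 else 0)"
proof -
  have "binomial_moment nested (Suc 0) r
      = (\<Sum>M\<in>matchings 0. \<Sum>a\<in>{1..2 * 0 + 1}.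
          real (card (occurrences nested (insert_arc 0 a M)) choose r))"
    unfolding binomial_moment_def by (rule sum_matchings_Suc)
  also have "\<dots> = real (card (occurrences nested (insert_arc 0 1 {})) choose r)"
    by (simp add: matchings_0)
  also have "occurrences nested (insert_arc 0 1 {}) = {}"
    by (auto simp: occurrences_def insert_arc_def)
  finally show ?thesis by simp
qed

lemma odd_dfact_Suc: "odd_dfact (Suc k) = (2 * k + 1) * odd_dfact k"
  unfolding odd_dfact_def by (simp add: prod.cl_ivl_Suc)

lemma odd_dfact_pos: "0 < odd_dfact n"
  unfolding odd_dfact_def by (rule prod_pos) auto

lemma binomial_moment_eq:
  "binomial_moment nested (Suc n) r = real (n choose r) * real (odd_dfact (Suc n - r))"
proof (induction n arbitrary: r)
  case 0
  show ?case
    using binomial_moment_1[of nested r] by (cases r) (simp_all add: odd_dfact_def)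
next
  case (Suc n)
  show ?case
  proof (cases r)
    case 0
    have "odd_dfact (Suc (Suc n)) = (2 * Suc n + 1) * odd_dfact (Suc n)" by (rule odd_dfact_Suc)
    then show ?thesis
      using binomial_moment_Suc[of "Suc n" nested 0] Suc.IH[of 0] 0 by (simp add: algebra_simps)
  next
    case (Suc k)
    have step: "binomial_moment nested (Suc (Suc n)) r
        = (2 * real n + 1 - 2 * real k) * (real (n choose r) * real (odd_dfact (n - k)))
          + real (n choose k) * real (odd_dfact (Suc n - k))"
      using binomial_moment_Suc[of "Suc n" nested r] Suc.IH[of r] Suc.IH[of k] Suc
      by (simp add: algebra_simps)
    show ?thesis
    proof (cases "k \<le> n")
      case True
      have "odd_dfact (Suc n - k) = (2 * (n - k) + 1) * odd_dfact (n - k)"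
        using True by (simp add: Suc_diff_le odd_dfact_Suc)
      moreover have "real (2 * (n - k) + 1) = 2 * real n + 1 - 2 * real k"
        using True by (simp add: of_nat_diff)
      ultimately have "(2 * real n + 1 - 2 * real k) * real (odd_dfact (n - k))
          = real (odd_dfact (Suc n - k))"
        by (metis of_nat_mult)
      then show ?thesis using step Suc by (simp add: algebra_simps)
    next
      case False
      then show ?thesis using step Suc by (simp add: binomial_eq_0)
    qed
  qed
qed

lemma alternating_binomial_sum:
  assumes "m \<le> N"
  shows "(\<Sum>r\<le>N. (-1) ^ (r + k) * real (r choose k) * real (m choose r)) = of_bool (m = k)"
proof -
  define f where "f r = (-1) ^ (r + k) * real (r choose k) * real (m choose r)" for r
  have "(\<Sum>r\<le>N. f r) = (\<Sum>r\<in>{k..m}. f r)"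
    by (rule sum.mono_neutral_right) (use assms in \<open>auto simp: f_def binomial_eq_0\<close>)
  also have "\<dots> = of_bool (m = k)"
  proof (cases "k \<le> m")
    case True
    have "(\<Sum>r\<in>{k..m}. f r) = (\<Sum>j\<le>m - k. f (j + k))"
      using sum.shift_bounds_cl_nat_ivl[of f 0 k "m - k"] True by (simp add: atLeast0AtMost)
    also have "\<dots> = real (m choose k) * (\<Sum>j\<le>m - k. (-1) ^ j * real ((m - k) choose j))"
      unfolding sum_distrib_left
    proof (rule sum.cong)
      fix j assume "j \<in> {..m - k}"
      then have "(m choose (j + k)) * ((j + k) choose k) = (m choose k) * ((m - k) choose j)"
        using choose_mult[of k "j + k" m] True by simp
      then have "real (m choose (j + k)) * real ((j + k) choose k)
          = real (m choose k) * real ((m - k) choose j)"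
        by (metis of_nat_mult)
      moreover have "(-1 :: real) ^ (j + k + k) = (-1) ^ j"
        by (simp add: power_add flip: mult_2 power_mult)
      ultimately show "f (j + k) = real (m choose k) * ((-1) ^ j * real ((m - k) choose j))"
        unfolding f_def by (simp add: algebra_simps)
    qed simp
    also have "\<dots> = of_bool (m = k)"
      using choose_alternating_sum[of "m - k", where 'a = real] True by (cases "m = k") simp_all
    finally show ?thesis .
  qed simp
  finally show ?thesis unfolding f_def .
qed

lemma card_level_set_eq_binomial_moments:
  fixes f :: "'a \<Rightarrow> nat"
  assumes X: "finite X" and bound: "\<And>x. x \<in> X \<Longrightarrow> f x \<le> N"
  shows "real (card {x \<in> X. f x = k})
    = (\<Sum>r\<le>N. (-1) ^ (r + k) * real (r choose k) * (\<Sum>x\<in>X. real (f x choose r)))"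
proof -
  have "real (card {x \<in> X. f x = k}) = (\<Sum>x\<in>X. of_bool (f x = k))"
    using X by (simp add: Collect_conj_eq Int_commute)
  also have "\<dots> = (\<Sum>x\<in>X. \<Sum>r\<le>N. (-1) ^ (r + k) * real (r choose k) * real (f x choose r))"
    using alternating_binomial_sum bound by (simp cong: sum.cong)
  also have "\<dots> = (\<Sum>r\<le>N. (-1) ^ (r + k) * real (r choose k) * (\<Sum>x\<in>X. real (f x choose r)))"
    by (subst sum.swap) (simp add: sum_distrib_left)
  finally show ?thesis .
qed

section \<open>The Poisson limit\<close>

(* By binomial_moment_eq, moment_ratio n r is the mean of (occ M choose r) over the
   matchings M of size n + 1. *)
definition moment_ratio :: "nat \<Rightarrow> nat \<Rightarrow> real" where
  "moment_ratio n r = real (n choose r) * real (odd_dfact (Suc n - r)) / real (odd_dfact (Suc n))"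

lemma moment_ratio_0: "moment_ratio n 0 = 1"
  using odd_dfact_pos[of "Suc n"] by (simp add: moment_ratio_def)

lemma moment_ratio_Suc:
  "moment_ratio n (Suc r) = moment_ratio n r * (real (n - r) / (2 * real (n - r) + 1) / real (Suc r))"
proof (cases "r < n")
  case True
  let ?m = "real (n - r)"
  have "real (Suc r) * real (n choose Suc r) = ?m * real (n choose r)"
    using binomial_absorption[of r n] binomial_absorb_comp[of n r] by (metis of_nat_mult)
  then have choose: "real (n choose Suc r) = ?m * real (n choose r) / real (Suc r)"
    by (simp add: field_simps)
  have "odd_dfact (Suc n - r) = (2 * (n - r) + 1) * odd_dfact (n - r)"
    using True by (simp add: Suc_diff_le odd_dfact_Suc)
  then have dfact: "real (odd_dfact (Suc n - r)) = (2 * ?m + 1) * real (odd_dfact (n - r))"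
    by (metis of_nat_1 of_nat_add of_nat_mult of_nat_numeral)
  have "moment_ratio n r * (?m / (2 * ?m + 1) / real (Suc r))
      = real (n choose r) * ((2 * ?m + 1) * real (odd_dfact (n - r))) / real (odd_dfact (Suc n))
        * (?m / (2 * ?m + 1) / real (Suc r))"
    unfolding moment_ratio_def dfact ..
  also have "\<dots> = ?m * real (n choose r) / real (Suc r) * real (odd_dfact (n - r))
      / real (odd_dfact (Suc n))"
  proof -
    have cancel: "c * (K * u) / D * (m / K / R) = m * c / R * u / D"
      if "K \<noteq> 0" for c K u D m R :: real
      using that by (simp add: field_simps)
    have "2 * ?m + 1 \<noteq> 0" by linarith
    then show ?thesis by (rule cancel)
  qed
  also have "\<dots> = moment_ratio n (Suc r)"
    unfolding moment_ratio_def choose by simp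
  finally show ?thesis ..
next
  case False
  then show ?thesis by (simp add: moment_ratio_def binomial_eq_0)
qed

lemma half_fraction_bounds:
  "0 \<le> real m / (2 * real m + 1) \<and> real m / (2 * real m + 1) \<le> 1 / 2"
proof -
  have "0 < 2 * real m + 1" by simp
  then show ?thesis by (simp add: divide_le_eq)
qed

lemma half_fraction_limit: "(\<lambda>n. real (n - r) / (2 * real (n - r) + 1)) \<longlonglongrightarrow> 1 / 2"
proof (rule LIMSEQ_offset[where k = r])
  have "(\<lambda>m. 1 / (2 + 1 / real m)) \<longlonglongrightarrow> 1 / (2 + 0)"
    by (intro tendsto_intros lim_inverse_n') auto
  moreover have "eventually (\<lambda>m. 1 / (2 + 1 / real m) = real (m + r - r) / (2 * real (m + r - r) + 1))
      sequentially"
    using eventually_gt_at_top[of 0] by eventually_elim (simp add: field_simps)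
  ultimately show "(\<lambda>m. real (m + r - r) / (2 * real (m + r - r) + 1)) \<longlonglongrightarrow> 1 / 2"
    by (simp add: Lim_transform_eventually)
qed

lemma moment_ratio_bounds: "0 \<le> moment_ratio n r \<and> moment_ratio n r \<le> (1 / 2) ^ r / fact r"
proof (induction r)
  case 0
  then show ?case by (simp add: moment_ratio_0)
next
  case (Suc r)
  have half: "0 \<le> real (n - r) / (2 * real (n - r) + 1)"
    "real (n - r) / (2 * real (n - r) + 1) \<le> 1 / 2"
    using half_fraction_bounds[of "n - r"] by auto
  have factor_nonneg: "0 \<le> real (n - r) / (2 * real (n - r) + 1) / real (Suc r)"
    using half(1) by simp
  have factor_le: "real (n - r) / (2 * real (n - r) + 1) / real (Suc r) \<le> 1 / 2 / real (Suc r)"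
    using half(2) by (rule divide_right_mono) simp
  have "moment_ratio n (Suc r) \<le> (1 / 2) ^ r / fact r * (1 / 2 / real (Suc r))"
    unfolding moment_ratio_Suc using Suc.IH factor_nonneg factor_le by (intro mult_mono) auto
  also have "\<dots> = (1 / 2) ^ Suc r / fact (Suc r)" by (simp add: field_simps)
  finally show ?case
    using Suc.IH factor_nonneg factor_le by (simp add: moment_ratio_Suc)
qed

lemma moment_ratio_limit: "(\<lambda>n. moment_ratio n r) \<longlonglongrightarrow> (1 / 2) ^ r / fact r"
proof (induction r)
  case 0
  then show ?case by (simp add: moment_ratio_0)
next
  case (Suc r)
  have "(\<lambda>n. moment_ratio n (Suc r)) \<longlonglongrightarrow> (1 / 2) ^ r / fact r * (1 / 2 / real (Suc r))"
    unfolding moment_ratio_Suc by (intro tendsto_intros Suc.IH half_fraction_limit) simp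
  then show ?case by (simp add: field_simps)
qed

lemma sums_alternating_binomial_exp:
  fixes x :: real
  shows "(\<lambda>r. (-1) ^ (r + k) * real (r choose k) * (x ^ r / fact r))
    sums (x ^ k / fact k * exp (- x))"
proof -
  define b where "b r = (-1) ^ (r + k) * real (r choose k) * (x ^ r / fact r)" for r
  have "b (j + k) = x ^ k / fact k * ((- x) ^ j / fact j)" for j
  proof -
    have "real ((j + k) choose k) = fact (j + k) / (fact k * fact j)"
      using binomial_fact[of k "j + k", where 'a = real] by simp
    moreover have "(-1 :: real) ^ (j + k + k) = (-1) ^ j"
      by (simp add: power_add flip: mult_2 power_mult)
    ultimately have "b (j + k)
        = (-1) ^ j * (fact (j + k) / (fact k * fact j)) * (x ^ j * x ^ k / fact (j + k))"
      unfolding b_def by (simp add: power_add)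
    also have "\<dots> = x ^ k / fact k * ((-1) ^ j * x ^ j / fact j)"
      by (simp add: field_simps)
    finally show ?thesis by (simp add: power_minus[of x])
  qed
  moreover have "(\<lambda>j. x ^ k / fact k * ((- x) ^ j / fact j)) sums (x ^ k / fact k * exp (- x))"
    using exp_converges[of "- x"] by (intro sums_mult) (simp add: divide_inverse mult.commute)
  ultimately have "(\<lambda>j. b (j + k)) sums (x ^ k / fact k * exp (- x))" by simp
  moreover have "b i = 0" if "i < k" for i using that by (simp add: b_def binomial_eq_0)
  ultimately show ?thesis using sums_zero_iff_shift[of k b] unfolding b_def by simp
qed

lemma occurrence_count_ratio:
  "real (a_nk (\<lambda>M. card (occurrences nested M)) (Suc n) k) / real (odd_dfact (Suc n))
     = (\<Sum>r\<le>Suc n. (-1) ^ (r + k) * real (r choose k) * moment_ratio n r)"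
proof -
  have "real (a_nk (\<lambda>M. card (occurrences nested M)) (Suc n) k)
      = (\<Sum>r\<le>Suc n. (-1) ^ (r + k) * real (r choose k) * binomial_moment nested (Suc n) r)"
    unfolding a_nk_def binomial_moment_def
    by (rule card_level_set_eq_binomial_moments[OF finite_matchings])
      (simp add: matchings_def card_occurrences_le)
  then show ?thesis
    by (simp only: sum_divide_distrib binomial_moment_eq moment_ratio_def times_divide_eq_right)
qed

lemma moment_ratio_inversion_limit:
  "(\<lambda>n. \<Sum>r\<le>Suc n. (-1) ^ (r + k) * real (r choose k) * moment_ratio n r)
     \<longlonglongrightarrow> exp (-1/2) / (2 ^ k * fact k)"
proof -
  define a where "a r n = (-1) ^ (r + k) * real (r choose k) * moment_ratio n r" for r n
  define b where "b r = (-1) ^ (r + k) * real (r choose k) * ((1 / 2) ^ r / fact r :: real)" for r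
  have bound: "norm (a r n) \<le> 1 / fact r" for r n
  proof -
    have "norm (a r n) = real (r choose k) * moment_ratio n r"
      using moment_ratio_bounds[of n r] by (simp add: a_def abs_mult)
    also have "\<dots> \<le> 2 ^ r * ((1 / 2) ^ r / fact r)"
      using moment_ratio_bounds[of n r] binomial_le_pow2[of r k]
      by (intro mult_mono) (simp_all flip: of_nat_le_iff)
    also have "\<dots> = 1 / fact r" by (simp add: power_one_over)
    finally show ?thesis .
  qed
  have "(\<lambda>n. suminf (\<lambda>r. a r n)) \<longlonglongrightarrow> suminf b"
  proof (rule tannerys_theorem[THEN conjunct2, THEN conjunct2])
    show "(\<lambda>n. a r n) \<longlonglongrightarrow> b r" for r
      unfolding a_def b_def by (intro tendsto_intros moment_ratio_limit)
    show "eventually (\<lambda>(r, n). norm (a r n) \<le> 1 / fact r) (at_top \<times>\<^sub>F sequentially)"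
      by (rule always_eventually) (use bound in auto)
    show "summable (\<lambda>r. 1 / fact r :: real)"
      using summable_exp[of "1 :: real"] by (simp add: inverse_eq_divide)
  qed simp
  moreover have "suminf b = exp (-1/2) / (2 ^ k * fact k)"
    using sums_alternating_binomial_exp[of k "1 / 2"]
    unfolding b_def[abs_def] by (simp add: sums_iff power_one_over)
  moreover have "suminf (\<lambda>r. a r n) = (\<Sum>r\<le>Suc n. a r n)" for n
  proof -
    have "(\<lambda>r. a r n) sums (\<Sum>r\<le>Suc n. a r n)"
      by (rule sums_finite) (simp_all add: a_def moment_ratio_def binomial_eq_0)
    then show ?thesis by (simp add: sums_iff)
  qed
  ultimately show ?thesis unfolding a_def by simp
qed

lemma occurrence_count_limit:
  "(\<lambda>n. real (a_nk (\<lambda>M. card (occurrences nested M)) n k) / real (odd_dfact n))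
     \<longlonglongrightarrow> exp (-1/2) / (2 ^ k * fact k)"
proof -
  have "(\<lambda>n. real (a_nk (\<lambda>M. card (occurrences nested M)) (Suc n) k) / real (odd_dfact (Suc n)))
      \<longlonglongrightarrow> exp (-1/2) / (2 ^ k * fact k)"
    unfolding occurrence_count_ratio by (rule moment_ratio_inversion_limit)
  then show ?thesis
    by (rule filterlim_sequentially_Suc[of
          "\<lambda>n. real (a_nk (\<lambda>M. card (occurrences nested M)) n k) / real (odd_dfact n)", THEN iffD1])
qed

theorem corollary4:
  fixes k :: nat
  shows "((\<lambda>n. real (a_nk occ21 n k) / real (odd_dfact n))
            \<longlonglongrightarrow> exp (-1/2) / (2^k * fact k))
       \<and> ((\<lambda>n. real (a_nk occ12 n k) / real (odd_dfact n))
            \<longlonglongrightarrow> exp (-1/2) / (2^k * fact k))"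
  unfolding occ21_eq occ12_eq using occurrence_count_limit by blast

end
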